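(* Let $G$ be a graph of order $n$ with adjacency eigenvalues $\lambda_1(G)\ge\cdots\ge\lambda_n(G)$ and negative inertia $\nu^-=\nu^-(G)$. Let $F$ be a clique partition of $G$ and let $t_i^F$ be the $i$th largest clique-degree of $G$ with respect to $F$. Then for $1\le i\le\nu^-$, $$\lambda_{n-i+1}(G)\ge -t_i^F.$$ Equality holds if $G$ is clique-regular with respect to $F$ and $\nu^-=n-|F|$.
   Context: All graphs are finite and simple. A clique partition of $G$ is a set $F$ of cliques (sets of pairwise adjacent vertices) such that every edge lies in exactly one clique of $F$. The clique-degree of a vertex is the number of cliques of $F$ containing it; $t_1^F\ge\cdots\ge t_n^F$ are the clique-degrees in non-increasing order. $G$ is clique-regular with respect to $F$ if all clique-degrees are equal. $\nu^-(G)$ is the number of negative adjacency eigenvalues. *)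

theory Defs
  imports "Jordan_Normal_Form.Char_Poly"
begin

text \<open>A finite simple graph of order n: vertex set {0..<n}, edge relation E
  (only its restriction to the vertex set matters) which is symmetric and irreflexive.\<close>
definition simple_graph :: "nat \<Rightarrow> (nat \<Rightarrow> nat \<Rightarrow> bool) \<Rightarrow> bool" where
  "simple_graph n E \<longleftrightarrow> (\<forall>u<n. \<forall>v<n. E u v \<longleftrightarrow> E v u) \<and> (\<forall>v<n. \<not> E v v)"

definition adj_matrix :: "nat \<Rightarrow> (nat \<Rightarrow> nat \<Rightarrow> bool) \<Rightarrow> real mat" where
  "adj_matrix n E = mat n n (\<lambda>(i,j). if E i j then 1 else 0)"

definition adj_eigenvalues :: "nat \<Rightarrow> (nat \<Rightarrow> nat \<Rightarrow> bool) \<Rightarrow> real multiset" where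
  "adj_eigenvalues n E = proots (char_poly (adj_matrix n E))"

definition adj_eig :: "nat \<Rightarrow> (nat \<Rightarrow> nat \<Rightarrow> bool) \<Rightarrow> nat \<Rightarrow> real" where
  "adj_eig n E k = rev (sorted_list_of_multiset (adj_eigenvalues n E)) ! (k - 1)"

definition neg_inertia :: "nat \<Rightarrow> (nat \<Rightarrow> nat \<Rightarrow> bool) \<Rightarrow> nat" where
  "neg_inertia n E = size (filter_mset (\<lambda>x. x < 0) (adj_eigenvalues n E))"

definition is_clique :: "nat \<Rightarrow> (nat \<Rightarrow> nat \<Rightarrow> bool) \<Rightarrow> nat set \<Rightarrow> bool" where
  "is_clique n E C \<longleftrightarrow> C \<subseteq> {0..<n} \<and> (\<forall>u\<in>C. \<forall>v\<in>C. u \<noteq> v \<longrightarrow> E u v)"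

definition clique_partition :: "nat \<Rightarrow> (nat \<Rightarrow> nat \<Rightarrow> bool) \<Rightarrow> nat set set \<Rightarrow> bool" where
  "clique_partition n E F \<longleftrightarrow> (\<forall>C\<in>F. is_clique n E C) \<and>
     (\<forall>u<n. \<forall>v<n. E u v \<longrightarrow> (\<exists>!C. C \<in> F \<and> u \<in> C \<and> v \<in> C))"

definition clique_degree :: "nat set set \<Rightarrow> nat \<Rightarrow> nat" where
  "clique_degree F v = card {C \<in> F. v \<in> C}"

definition sorted_clique_degree :: "nat \<Rightarrow> nat set set \<Rightarrow> nat \<Rightarrow> nat" where
  "sorted_clique_degree n F i = rev (sort (map (clique_degree F) [0..<n])) ! (i - 1)"

definition clique_regular :: "nat \<Rightarrow> nat set set \<Rightarrow> bool" where
  "clique_regular n F \<longleftrightarrow> (\<exists>k. \<forall>v<n. clique_degree F v = k)"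

end

theory Submission
  imports Defs
begin

(* Let A be the adjacency matrix, N the vertex-clique incidence matrix of F and D the diagonal
   matrix of clique-degrees. Since every edge lies in exactly one clique of F, A + D = N N^T, i.e.
     x^T A x = sum_(C in F) (sum_(u in C) x_u)^2 - sum_u d_u x_u^2.
   For vectors vanishing at the fewer than i vertices of clique-degree above t_i this is at least
   -t_i |x|^2, so by a min-max count at most i - 1 eigenvalues lie below -t_i, which is the bound
   lambda_(n-i+1) >= -t_i.  If every clique-degree equals k, the form equals -k |x|^2 on the
   orthogonal complement of the |F| columns of N, so at most |F| eigenvalues exceed -k; when
   nu^- = n - |F| this forces the nu^- smallest eigenvalues to equal -k. *)

section \<open>Spectral theorem for real symmetric matrices\<close>

lemma nonzero_vec_has_nonzero_entry:
  assumes "v \<in> carrier_vec n" and "v \<noteq> 0\<^sub>v n"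
  shows "\<exists>i < n. v $ i \<noteq> 0"
  using assms by (auto intro!: eq_vecI)

lemma symmetric_mat_real_eigenvector:
  fixes A :: "real mat"
  assumes A: "A \<in> carrier_mat n n" and sym: "transpose_mat A = A" and n: "0 < n"
  shows "\<exists>e v. v \<in> carrier_vec n \<and> v \<noteq> 0\<^sub>v n \<and> A *\<^sub>v v = e \<cdot>\<^sub>v v"
proof -
  define Ac where "Ac = map_mat complex_of_real A"
  have Ac: "Ac \<in> carrier_mat n n" using A by (simp add: Ac_def)
  obtain zs where zs: "char_poly Ac = (\<Prod>z\<leftarrow>zs. [:- z, 1:])" "length zs = n"
    using char_poly_factorized[OF Ac] by blast
  have "poly (char_poly Ac) (zs ! 0) = 0"
    using zs n by (simp add: poly_prod_list prod_list_zero_iff)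
  then obtain w where "eigenvector Ac w (zs ! 0)"
    using eigenvalue_root_char_poly[OF Ac] unfolding eigenvalue_def by blast
  then obtain z where w: "w \<in> carrier_vec n" "w \<noteq> 0\<^sub>v n" and Aw: "Ac *\<^sub>v w = z \<cdot>\<^sub>v w"
    using Ac unfolding eigenvector_def by auto
  define a where "a = map_vec Re w"
  define b where "b = map_vec Im w"
  have a: "a \<in> carrier_vec n" and b: "b \<in> carrier_vec n" using w by (auto simp: a_def b_def)
  have row: "(\<Sum>j<n. complex_of_real (A $$ (i, j)) * w $ j) = z * w $ i" if "i < n" for i
    using arg_cong[OF Aw, of "\<lambda>v. v $ i"] that A w
    by (simp add: Ac_def scalar_prod_def lessThan_atLeast0)
  have Aa: "A *\<^sub>v a = Re z \<cdot>\<^sub>v a - Im z \<cdot>\<^sub>v b"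
  proof (rule eq_vecI)
    fix i assume "i < dim_vec (Re z \<cdot>\<^sub>v a - Im z \<cdot>\<^sub>v b)"
    hence i: "i < n" using a b by simp
    show "(A *\<^sub>v a) $ i = (Re z \<cdot>\<^sub>v a - Im z \<cdot>\<^sub>v b) $ i"
      using arg_cong[OF row[OF i], of Re] i A a b w
      by (simp add: a_def b_def scalar_prod_def lessThan_atLeast0 Re_sum)
  qed (use A a b in auto)
  have Ab: "A *\<^sub>v b = Re z \<cdot>\<^sub>v b + Im z \<cdot>\<^sub>v a"
  proof (rule eq_vecI)
    fix i assume "i < dim_vec (Re z \<cdot>\<^sub>v b + Im z \<cdot>\<^sub>v a)"
    hence i: "i < n" using a b by simp
    show "(A *\<^sub>v b) $ i = (Re z \<cdot>\<^sub>v b + Im z \<cdot>\<^sub>v a) $ i"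
      using arg_cong[OF row[OF i], of Im] i A a b w
      by (simp add: a_def b_def scalar_prod_def lessThan_atLeast0 Im_sum algebra_simps)
  qed (use A a b in auto)
  \<comment> \<open>symmetry of \<open>A\<close> forces the eigenvalue \<open>z\<close> of the eigenvector \<open>a + i b\<close> to be real\<close>
  have "a \<bullet> (A *\<^sub>v b) = (A *\<^sub>v a) \<bullet> b"
    using transpose_vec_mult_scalar[OF A b a] sym A a b by (simp add: comm_scalar_prod[of _ n])
  hence "Im z * (a \<bullet> a + b \<bullet> b) = 0"
    unfolding Aa Ab using a b
    by (simp add: scalar_prod_add_distrib add_scalar_prod_distrib minus_scalar_prod_distrib
        scalar_prod_minus_distrib comm_scalar_prod[of a n b] algebra_simps)
  moreover have "a \<noteq> 0\<^sub>v n \<or> b \<noteq> 0\<^sub>v n"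
  proof -
    obtain k where k: "k < n" "w $ k \<noteq> 0" using nonzero_vec_has_nonzero_entry[OF w] by blast
    hence "a $ k \<noteq> 0 \<or> b $ k \<noteq> 0" using w by (simp add: a_def b_def complex_eq_iff)
    thus ?thesis using k by auto
  qed
  moreover have "0 < a \<bullet> a + b \<bullet> b"
    using \<open>a \<noteq> 0\<^sub>v n \<or> b \<noteq> 0\<^sub>v n\<close> conjugate_square_greater_0_vec[OF a]
      conjugate_square_greater_0_vec[OF b] conjugate_square_ge_0_vec[of a]
      conjugate_square_ge_0_vec[of b]
    by (auto simp: add_pos_nonneg add_nonneg_pos)
  ultimately have "Im z = 0" by simp
  hence "A *\<^sub>v a = Re z \<cdot>\<^sub>v a" "A *\<^sub>v b = Re z \<cdot>\<^sub>v b"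
    using Aa Ab a b by (auto intro!: eq_vecI)
  thus ?thesis using a b \<open>a \<noteq> 0\<^sub>v n \<or> b \<noteq> 0\<^sub>v n\<close> by blast
qed

lemma symmetric_mat_unit_eigenvector:
  fixes A :: "real mat"
  assumes A: "A \<in> carrier_mat n n" and sym: "transpose_mat A = A" and n: "0 < n"
  shows "\<exists>e u. u \<in> carrier_vec n \<and> u \<bullet> u = 1 \<and> A *\<^sub>v u = e \<cdot>\<^sub>v u"
proof -
  obtain e v where v: "v \<in> carrier_vec n" "v \<noteq> 0\<^sub>v n" and Av: "A *\<^sub>v v = e \<cdot>\<^sub>v v"
    using symmetric_mat_real_eigenvector[OF A sym n] by blast
  have vv: "0 < v \<bullet> v" using conjugate_square_greater_0_vec[OF v(1)] v(2) by simp
  define u where "u = (1 / sqrt (v \<bullet> v)) \<cdot>\<^sub>v v"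
  have "u \<in> carrier_vec n" and "u \<bullet> u = 1"
    using v vv by (simp_all add: u_def power2_eq_square[symmetric])
  moreover have "A *\<^sub>v u = e \<cdot>\<^sub>v u"
    using v A Av by (simp add: u_def mult_mat_vec smult_smult_assoc mult.commute)
  ultimately show ?thesis by blast
qed

lemma orthogonal_mat_with_first_col:
  fixes u :: "real vec"
  assumes u: "u \<in> carrier_vec n" and n: "0 < n" and uu: "u \<bullet> u = 1"
  shows "\<exists>W \<in> carrier_mat n n. transpose_mat W * W = 1\<^sub>m n \<and> col W 0 = u"
proof -
  define \<delta> :: "nat \<Rightarrow> nat \<Rightarrow> real" where "\<delta> i j = (if i = j then 1 else 0)" for i j
  have sum_\<delta>: "(\<Sum>k<n. \<delta> i k * f k) = f i" "(\<Sum>k<n. \<delta> k i * f k) = f i" if "i < n" for i f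
    using that by (simp_all add: \<delta>_def if_distrib[of "\<lambda>x. x * _"] cong: if_cong)
  define h where "h k = u $ k - \<delta> 0 k" for k
  define s where "s = (\<Sum>k<n. h k ^ 2)"
  have "s = (\<Sum>k<n. u $ k ^ 2) - 2 * (\<Sum>k<n. \<delta> 0 k * u $ k) + (\<Sum>k<n. \<delta> 0 k * \<delta> 0 k)"
    by (simp add: s_def h_def power2_eq_square algebra_simps sum.distrib sum_subtractf
        sum_distrib_left)
  also have "(\<Sum>k<n. u $ k ^ 2) = 1"
    using uu u by (simp add: scalar_prod_def lessThan_atLeast0 power2_eq_square)
  finally have s: "s = 2 - 2 * u $ 0" using n by (simp add: sum_\<delta>) (simp add: \<delta>_def)
  show ?thesis
  proof (cases "s = 0")
    case True
    hence "h k = 0" if "k < n" for k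
      using that sum_nonneg_eq_0_iff[of "{..<n}" "\<lambda>k. h k ^ 2"] by (simp add: s_def)
    hence "col (1\<^sub>m n) 0 = u" using u n by (intro eq_vecI) (auto simp: h_def \<delta>_def split: if_splits)
    thus ?thesis by (intro bexI[of _ "1\<^sub>m n"]) auto
  next
    case False
    hence spos: "s > 0" unfolding s_def by (metis order_le_neq_trans sum_nonneg zero_le_power2)
    define t where "t = 2 / s"
    \<comment> \<open>the Householder reflection in the hyperplane orthogonal to \<open>u - e\<^sub>0\<close>\<close>
    define W where "W = mat n n (\<lambda>(i,j). \<delta> i j - t * h i * h j)"
    have W: "W \<in> carrier_mat n n" by (simp add: W_def)
    have "transpose_mat W * W = 1\<^sub>m n"
    proof (rule eq_matI)
      fix i j assume "i < dim_row (1\<^sub>m n)" "j < dim_col (1\<^sub>m n)"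
      hence i: "i < n" and j: "j < n" by auto
      have "(transpose_mat W * W) $$ (i,j) = (\<Sum>k<n. (\<delta> k i - t * h k * h i) * (\<delta> k j - t * h k * h j))"
        using i j W by (simp add: scalar_prod_def lessThan_atLeast0 W_def)
      also have "\<dots> = (\<Sum>k<n. \<delta> k i * \<delta> k j) - t * h i * (\<Sum>k<n. \<delta> k j * h k)
           - t * h j * (\<Sum>k<n. \<delta> k i * h k) + t * t * s * h i * h j"
        unfolding s_def
        by (simp add: algebra_simps sum.distrib sum_subtractf sum_distrib_left power2_eq_square)
      also have "\<dots> = \<delta> i j" using i j spos by (simp add: sum_\<delta> t_def)
      finally show "(transpose_mat W * W) $$ (i,j) = 1\<^sub>m n $$ (i,j)" using i j by (simp add: \<delta>_def)
    qed (use W in auto)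
    moreover have "col W 0 = u"
    proof (rule eq_vecI)
      fix i assume "i < dim_vec u"
      hence i: "i < n" using u by auto
      have "t * h 0 = -1" using s spos n by (simp add: t_def h_def \<delta>_def field_simps)
      moreover have "col W 0 $ i = \<delta> i 0 - (t * h 0) * h i" using i n by (simp add: W_def)
      ultimately show "col W 0 $ i = u $ i" by (simp add: h_def \<delta>_def)
    qed (use W u in auto)
    ultimately show ?thesis using W by blast
  qed
qed

lemma transpose_mat_conjugate_symmetric:
  fixes A W :: "'a :: comm_ring_1 mat"
  assumes A: "A \<in> carrier_mat n n" and W: "W \<in> carrier_mat n m" and sym: "transpose_mat A = A"
  shows "transpose_mat (transpose_mat W * A * W) = transpose_mat W * A * W"
proof -
  have "transpose_mat (transpose_mat W * A * W) = transpose_mat W * transpose_mat (transpose_mat W * A)"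
    using A W by (intro transpose_mult[of _ m n]) auto
  also have "transpose_mat (transpose_mat W * A) = A * W"
    using A W transpose_mult[of "transpose_mat W" m n A n] sym by simp
  finally show ?thesis using A W by (simp add: assoc_mult_mat[of _ m n _ n _ m])
qed

lemma symmetric_mat_orthogonal_deflation:
  fixes A W :: "real mat"
  assumes A: "A \<in> carrier_mat (Suc m) (Suc m)" and sym: "transpose_mat A = A"
    and W: "W \<in> carrier_mat (Suc m) (Suc m)" "transpose_mat W * W = 1\<^sub>m (Suc m)"
    and eigen: "A *\<^sub>v col W 0 = e \<cdot>\<^sub>v col W 0"
  shows "\<exists>B \<in> carrier_mat m m. transpose_mat B = B \<and>
    transpose_mat W * A * W = four_block_mat (mat 1 1 (\<lambda>_. e)) (0\<^sub>m 1 m) (0\<^sub>m m 1) B"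
proof -
  define A' where "A' = transpose_mat W * A * W"
  have A': "A' \<in> carrier_mat (Suc m) (Suc m)" using W A by (simp add: A'_def)
  have symA': "transpose_mat A' = A'"
    unfolding A'_def by (rule transpose_mat_conjugate_symmetric[OF A W(1) sym])
  have "col A' 0 = (transpose_mat W * A) *\<^sub>v col W 0"
    unfolding A'_def by (rule col_mult2) (use W A in auto)
  also have "\<dots> = transpose_mat W *\<^sub>v (A *\<^sub>v col W 0)"
    by (rule assoc_mult_mat_vec) (use W A in \<open>auto simp: carrier_vecI\<close>)
  also have "\<dots> = e \<cdot>\<^sub>v (transpose_mat W *\<^sub>v col W 0)"
    unfolding eigen by (rule mult_mat_vec) (use W in \<open>auto simp: carrier_vecI\<close>)
  also have "transpose_mat W *\<^sub>v col W 0 = col (transpose_mat W * W) 0"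
    by (rule col_mult2[symmetric, of _ "Suc m" "Suc m" _ "Suc m"]) (use W in auto)
  finally have col0_vec: "col A' 0 = e \<cdot>\<^sub>v unit_vec (Suc m) 0" using W(2) by simp
  have col0: "A' $$ (i, 0) = (if i = 0 then e else 0)" if "i < Suc m" for i
    using arg_cong[OF col0_vec, of "\<lambda>v. v $ i"] that A' by auto
  have sym_entry: "A' $$ (j, i) = A' $$ (i, j)" if "i < Suc m" "j < Suc m" for i j
    using arg_cong[OF symA', of "\<lambda>M. M $$ (i, j)"] that A' by auto
  have row0: "A' $$ (0, j) = (if j = 0 then e else 0)" if "j < Suc m" for j
    using col0[OF that] sym_entry[OF that] by simp
  define B where "B = mat m m (\<lambda>(i,j). A' $$ (Suc i, Suc j))"
  have "transpose_mat B = B"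
    using sym_entry by (auto simp: B_def intro!: eq_matI)
  moreover have "A' = four_block_mat (mat 1 1 (\<lambda>_. e)) (0\<^sub>m 1 m) (0\<^sub>m m 1) B"
    by (rule eq_matI) (use A' col0 row0 in \<open>auto simp: B_def less_Suc_eq_0_disj\<close>)
  ultimately show ?thesis unfolding A'_def by (intro bexI[of _ B]) (auto simp: B_def)
qed

lemma block_diag_orthogonal_conjugate:
  fixes P B E :: "'a :: comm_ring_1 mat"
  assumes P: "P \<in> carrier_mat m m" "transpose_mat P * P = 1\<^sub>m m"
    and B: "B \<in> carrier_mat m m" and E: "E \<in> carrier_mat 1 1"
  defines "X \<equiv> four_block_mat (1\<^sub>m 1) (0\<^sub>m 1 m) (0\<^sub>m m 1) P"
  shows "X \<in> carrier_mat (Suc m) (Suc m)" and "transpose_mat X * X = 1\<^sub>m (Suc m)"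
    and "transpose_mat X * four_block_mat E (0\<^sub>m 1 m) (0\<^sub>m m 1) B * X
         = four_block_mat E (0\<^sub>m 1 m) (0\<^sub>m m 1) (transpose_mat P * B * P)"
proof -
  have c11: "1\<^sub>m 1 \<in> carrier_mat 1 1" and c1m: "(0\<^sub>m 1 m :: 'a mat) \<in> carrier_mat 1 m"
    and cm1: "(0\<^sub>m m 1 :: 'a mat) \<in> carrier_mat m 1" and Pt: "transpose_mat P \<in> carrier_mat m m"
    using P by auto
  show "X \<in> carrier_mat (Suc m) (Suc m)"
    unfolding X_def using four_block_carrier_mat[OF c11 P(1)] by simp
  have Xt: "transpose_mat X = four_block_mat (1\<^sub>m 1) (0\<^sub>m 1 m) (0\<^sub>m m 1) (transpose_mat P)"
    unfolding X_def using P by (subst transpose_four_block_mat) auto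
  have "transpose_mat X * X = four_block_mat (1\<^sub>m 1) (0\<^sub>m 1 m) (0\<^sub>m m 1) (1\<^sub>m m)"
    unfolding Xt unfolding X_def mult_four_block_mat[OF c11 c1m cm1 Pt c11 c1m cm1 P(1)]
    using P by (intro cong_four_block_mat) auto
  thus "transpose_mat X * X = 1\<^sub>m (Suc m)" by simp
  have "transpose_mat X * four_block_mat E (0\<^sub>m 1 m) (0\<^sub>m m 1) B
      = four_block_mat E (0\<^sub>m 1 m) (0\<^sub>m m 1) (transpose_mat P * B)"
    unfolding Xt mult_four_block_mat[OF c11 c1m cm1 Pt E c1m cm1 B]
    using P B E by (intro cong_four_block_mat) auto
  moreover have "four_block_mat E (0\<^sub>m 1 m) (0\<^sub>m m 1) (transpose_mat P * B) * X
      = four_block_mat E (0\<^sub>m 1 m) (0\<^sub>m m 1) (transpose_mat P * B * P)"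
    unfolding X_def mult_four_block_mat[OF E c1m cm1 mult_carrier_mat[OF Pt B] c11 c1m cm1 P(1)]
    using P B E by (intro cong_four_block_mat) auto
  ultimately show "transpose_mat X * four_block_mat E (0\<^sub>m 1 m) (0\<^sub>m m 1) B * X
         = four_block_mat E (0\<^sub>m 1 m) (0\<^sub>m m 1) (transpose_mat P * B * P)"
    by simp
qed

lemma orthogonal_mat_mult:
  fixes W X A :: "'a :: comm_ring_1 mat"
  assumes W: "W \<in> carrier_mat n n" "transpose_mat W * W = 1\<^sub>m n"
    and X: "X \<in> carrier_mat n n" "transpose_mat X * X = 1\<^sub>m n" and A: "A \<in> carrier_mat n n"
  shows "W * X \<in> carrier_mat n n" and "transpose_mat (W * X) * (W * X) = 1\<^sub>m n"
    and "transpose_mat (W * X) * A * (W * X) = transpose_mat X * (transpose_mat W * A * W) * X"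
proof -
  show "W * X \<in> carrier_mat n n" using W X by simp
  have WX_T: "transpose_mat (W * X) = transpose_mat X * transpose_mat W"
    using W X by (simp add: transpose_mult)
  have "transpose_mat (W * X) * (W * X) = transpose_mat X * (transpose_mat W * W) * X"
    unfolding WX_T using W(1) X(1) by (simp add: assoc_mult_mat[of _ n n _ n _ n])
  thus "transpose_mat (W * X) * (W * X) = 1\<^sub>m n" unfolding W(2) using X by simp
  show "transpose_mat (W * X) * A * (W * X) = transpose_mat X * (transpose_mat W * A * W) * X"
    unfolding WX_T using W(1) X(1) A by (simp add: assoc_mult_mat[of _ n n _ n _ n])
qed

theorem symmetric_mat_orthogonally_diagonalizable:
  fixes A :: "real mat"
  assumes "A \<in> carrier_mat n n" and "transpose_mat A = A"
  shows "\<exists>P \<in> carrier_mat n n. transpose_mat P * P = 1\<^sub>m n \<and> diagonal_mat (transpose_mat P * A * P)"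
  using assms
proof (induction n arbitrary: A)
  case 0
  show ?case by (intro bexI[of _ "1\<^sub>m 0"]) (auto simp: diagonal_mat_def)
next
  case (Suc m)
  note A = Suc.prems(1) and sym = Suc.prems(2)
  obtain e u where u: "u \<in> carrier_vec (Suc m)" and uu: "u \<bullet> u = 1" and Au: "A *\<^sub>v u = e \<cdot>\<^sub>v u"
    using symmetric_mat_unit_eigenvector[OF A sym] by blast
  obtain W where W: "W \<in> carrier_mat (Suc m) (Suc m)" "transpose_mat W * W = 1\<^sub>m (Suc m)"
    and Wu: "col W 0 = u"
    using orthogonal_mat_with_first_col[OF u _ uu] by auto
  define E where "E = mat 1 1 (\<lambda>_. e)"
  obtain B where B: "B \<in> carrier_mat m m" "transpose_mat B = B"
    and WAW: "transpose_mat W * A * W = four_block_mat E (0\<^sub>m 1 m) (0\<^sub>m m 1) B"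
    using symmetric_mat_orthogonal_deflation[OF A sym W] Au Wu by (auto simp: E_def)
  obtain Q where Q: "Q \<in> carrier_mat m m" "transpose_mat Q * Q = 1\<^sub>m m"
    and QBQ: "diagonal_mat (transpose_mat Q * B * Q)"
    using Suc.IH[OF B] by blast
  define X where "X = four_block_mat (1\<^sub>m 1) (0\<^sub>m 1 m) (0\<^sub>m m 1) Q"
  have E: "E \<in> carrier_mat 1 1" by (simp add: E_def)
  note X = block_diag_orthogonal_conjugate[OF Q B(1) E, folded X_def]
  note WX = orthogonal_mat_mult[OF W X(1,2) A]
  have "transpose_mat (W * X) * A * (W * X)
       = four_block_mat E (0\<^sub>m 1 m) (0\<^sub>m m 1) (transpose_mat Q * B * Q)"
    unfolding WX(3) WAW X(3) ..
  moreover have "diagonal_mat (four_block_mat E (0\<^sub>m 1 m) (0\<^sub>m m 1) (transpose_mat Q * B * Q))"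
    using QBQ E Q B unfolding diagonal_mat_def by auto
  ultimately show ?case using WX(1,2) by metis
qed

section \<open>Counting eigenvalues with quadratic forms\<close>

lemma proots_prod_list_linear_factors: "proots (\<Prod>a\<leftarrow>as. [:- a, 1:]) = mset (as :: 'a :: idom list)"
proof (induction as)
  case (Cons a as)
  have "proots (\<Prod>b\<leftarrow>a # as. [:- b, 1:]) = proots ([:- a, 1:] * (\<Prod>b\<leftarrow>as. [:- b, 1:]))"
    by simp
  also have "\<dots> = proots [:- a, 1:] + proots (\<Prod>b\<leftarrow>as. [:- b, 1:])"
    by (rule proots_mult) (auto simp: prod_list_zero_iff)
  finally show ?case using Cons.IH by (simp only: proots_linear_factor) simp
qed simp

lemma proots_char_poly_orthogonally_diagonalized:
  fixes A P :: "real mat"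
  assumes A: "A \<in> carrier_mat n n" and P: "P \<in> carrier_mat n n" "transpose_mat P * P = 1\<^sub>m n"
    and diag: "diagonal_mat (transpose_mat P * A * P)"
  shows "proots (char_poly A) = mset (diag_mat (transpose_mat P * A * P))"
proof -
  define D where "D = transpose_mat P * A * P"
  have D: "D \<in> carrier_mat n n" using A P by (simp add: D_def)
  have Pt: "transpose_mat P \<in> carrier_mat n n" using P by simp
  have PPt: "P * transpose_mat P = 1\<^sub>m n" using mat_mult_left_right_inverse[OF Pt P(1) P(2)] .
  have "P * D * transpose_mat P = (P * transpose_mat P) * A * (P * transpose_mat P)"
    unfolding D_def using P Pt A by (simp add: assoc_mult_mat[of _ n n _ n _ n])
  hence "A = P * D * transpose_mat P" unfolding PPt using A by simp
  hence "similar_mat A D"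
    using A D P PPt by (intro similar_matI[of A D P "transpose_mat P" n]) auto
  hence "char_poly A = char_poly D" by (rule char_poly_similar)
  also have "\<dots> = (\<Prod>a\<leftarrow>diag_mat D. [:- a, 1:])"
    by (rule char_poly_upper_triangular[OF D])
      (use diag in \<open>auto simp: D_def diagonal_mat_def upper_triangular_def\<close>)
  finally show ?thesis by (simp add: D_def proots_prod_list_linear_factors)
qed

lemma exists_nonzero_vec_orthogonal:
  fixes L :: "'a :: idom vec list"
  assumes L: "set L \<subseteq> carrier_vec n" and len: "length L < n"
  shows "\<exists>y \<in> carrier_vec n. y \<noteq> 0\<^sub>v n \<and> (\<forall>l \<in> set L. l \<bullet> y = 0)"
proof -
  define r where "r i = (if i < length L then L ! i else 0\<^sub>v n)" for i
  define M where "M = mat\<^sub>r n n r"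
  have M: "M \<in> carrier_mat n n" by (simp add: M_def)
  have r: "r \<in> {0..<n} \<rightarrow> carrier_vec n" using L nth_mem by (fastforce simp: r_def)
  have "M = mat\<^sub>r n n (\<lambda>i. if i = n - 1 then 0\<^sub>v n else r i)"
    using len by (auto simp: M_def r_def intro!: eq_matI)
  hence "det M = 0" using det_row_0[OF _ r, of "n - 1"] len by simp
  then obtain y where y: "y \<in> carrier_vec n" "y \<noteq> 0\<^sub>v n" "M *\<^sub>v y = 0\<^sub>v n"
    using det_0_iff_vec_prod_zero[OF M] by auto
  have "L ! k \<bullet> y = 0" if k: "k < length L" for k
  proof -
    have "r k \<in> carrier_vec n" using r k len by auto
    hence "row M k = L ! k" using k len by (simp add: M_def r_def)
    thus ?thesis using arg_cong[OF y(3), of "\<lambda>v. v $ k"] k len M by simp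
  qed
  thus ?thesis using y by (metis in_set_conv_nth)
qed

lemma exists_nonzero_vec_supported_orthogonal:
  fixes L :: "'a :: idom vec list"
  assumes J: "J \<subseteq> {..<n}" and L: "set L \<subseteq> carrier_vec n" and len: "length L < card J"
  shows "\<exists>y \<in> carrier_vec n. y \<noteq> 0\<^sub>v n \<and> (\<forall>i < n. i \<notin> J \<longrightarrow> y $ i = 0) \<and> (\<forall>l \<in> set L. l \<bullet> y = 0)"
proof -
  define L' where "L' = L @ map (unit_vec n) (filter (\<lambda>i. i \<notin> J) [0..<n])"
  have "length (filter (\<lambda>i. i \<notin> J) [0..<n]) = card ({..<n} - J)"
    by (subst distinct_card[symmetric]) (auto intro!: arg_cong[where f = card])
  also have "\<dots> = n - card J" using J by (simp add: card_Diff_subset finite_subset)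
  finally have "length L' < n"
    using len card_mono[OF _ J] by (simp add: L'_def)
  moreover have "set L' \<subseteq> carrier_vec n" using L by (auto simp: L'_def)
  ultimately obtain y where y: "y \<in> carrier_vec n" "y \<noteq> 0\<^sub>v n" and yL': "\<forall>l \<in> set L'. l \<bullet> y = 0"
    using exists_nonzero_vec_orthogonal by blast
  have "y $ i = 0" if "i < n" "i \<notin> J" for i
  proof -
    have "unit_vec n i \<in> set L'" using that by (auto simp: L'_def)
    thus ?thesis using yL' that y by fastforce
  qed
  thus ?thesis using y yL' by (auto simp: L'_def)
qed

lemma quadratic_form_conjugate:
  fixes P M :: "'a :: comm_ring_1 mat"
  assumes P: "P \<in> carrier_mat n n" and M: "M \<in> carrier_mat n n" and y: "y \<in> carrier_vec n"
  shows "(P *\<^sub>v y) \<bullet> (M *\<^sub>v (P *\<^sub>v y)) = y \<bullet> ((transpose_mat P * M * P) *\<^sub>v y)"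
proof -
  have "(P *\<^sub>v y) \<bullet> (M *\<^sub>v (P *\<^sub>v y)) = y \<bullet> (transpose_mat P *\<^sub>v (M *\<^sub>v (P *\<^sub>v y)))"
    using transpose_vec_mult_scalar[of "transpose_mat P" n n "M *\<^sub>v (P *\<^sub>v y)" y] P M y by simp
  also have "transpose_mat P *\<^sub>v (M *\<^sub>v (P *\<^sub>v y)) = (transpose_mat P * M * P) *\<^sub>v y"
    using P M y by (simp add: assoc_mult_mat_vec[of _ n n _ n])
  finally show ?thesis .
qed

lemma quadratic_form_diagonal:
  fixes D :: "'a :: comm_ring_1 mat"
  assumes D: "D \<in> carrier_mat n n" "diagonal_mat D" and y: "y \<in> carrier_vec n"
  shows "y \<bullet> (D *\<^sub>v y) = (\<Sum>i<n. D $$ (i,i) * (y $ i)\<^sup>2)"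
proof -
  have "(\<Sum>j<n. D $$ (i,j) * y $ j) = D $$ (i,i) * y $ i" if "i < n" for i
    using D that unfolding diagonal_mat_def by (subst sum.remove[of _ i]) auto
  thus ?thesis using D y
    by (simp add: scalar_prod_def lessThan_atLeast0 power2_eq_square algebra_simps)
qed

lemma card_diagonal_entries_below_le:
  fixes A P :: "real mat" and L :: "real vec list"
  assumes A: "A \<in> carrier_mat n n" and P: "P \<in> carrier_mat n n" "transpose_mat P * P = 1\<^sub>m n"
    and diag: "diagonal_mat (transpose_mat P * A * P)"
    and L: "set L \<subseteq> carrier_vec n"
    and bound: "\<And>x. x \<in> carrier_vec n \<Longrightarrow> (\<forall>l \<in> set L. l \<bullet> x = 0) \<Longrightarrow> c * (x \<bullet> x) \<le> x \<bullet> (A *\<^sub>v x)"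
  shows "card {i. i < n \<and> (transpose_mat P * A * P) $$ (i,i) < c} \<le> length L"
proof (rule ccontr)
  define D where "D = transpose_mat P * A * P"
  define J where "J = {i. i < n \<and> D $$ (i,i) < c}"
  assume "\<not> ?thesis"
  hence J_L: "length L < card J" by (simp add: J_def D_def)
  obtain y where y: "y \<in> carrier_vec n" "y \<noteq> 0\<^sub>v n" and y_J: "\<And>i. i < n \<Longrightarrow> i \<notin> J \<Longrightarrow> y $ i = 0"
    and yL: "\<forall>l \<in> set L. (transpose_mat P *\<^sub>v l) \<bullet> y = 0"
  proof -
    have "J \<subseteq> {..<n}" and "set (map (\<lambda>l. transpose_mat P *\<^sub>v l) L) \<subseteq> carrier_vec n"
      using L P by (auto simp: J_def)
    from exists_nonzero_vec_supported_orthogonal[OF this] J_L that show thesis by auto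
  qed
  define x where "x = P *\<^sub>v y"
  have x: "x \<in> carrier_vec n" using P y by (simp add: x_def)
  have "l \<bullet> x = 0" if "l \<in> set L" for l
    using yL that transpose_vec_mult_scalar[of P n n y l] P y L by (auto simp: x_def)
  hence "c * (x \<bullet> x) \<le> x \<bullet> (A *\<^sub>v x)" using bound x by blast
  moreover have "x \<bullet> x = (\<Sum>i<n. (y $ i)\<^sup>2)"
    using quadratic_form_conjugate[OF P(1) one_carrier_mat y(1)] quadratic_form_diagonal[of "1\<^sub>m n" n y] P y
    by (simp add: x_def diagonal_mat_def)
  moreover have "x \<bullet> (A *\<^sub>v x) = (\<Sum>i<n. D $$ (i,i) * (y $ i)\<^sup>2)"
    using quadratic_form_conjugate[OF P(1) A y(1)] quadratic_form_diagonal[of D n y] diag P A y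
    by (simp add: x_def D_def)
  moreover have "(\<Sum>i<n. D $$ (i,i) * (y $ i)\<^sup>2) < (\<Sum>i<n. c * (y $ i)\<^sup>2)"
  proof (rule sum_strict_mono_ex1)
    show "\<forall>i\<in>{..<n}. D $$ (i,i) * (y $ i)\<^sup>2 \<le> c * (y $ i)\<^sup>2"
    proof
      fix i assume i: "i \<in> {..<n}"
      show "D $$ (i,i) * (y $ i)\<^sup>2 \<le> c * (y $ i)\<^sup>2"
      proof (cases "i \<in> J")
        case True
        hence "D $$ (i,i) < c" by (simp add: J_def)
        thus ?thesis by (simp add: mult_right_mono)
      next
        case False
        thus ?thesis using y_J i by simp
      qed
    qed
    obtain k where k: "k < n" "y $ k \<noteq> 0" using y nonzero_vec_has_nonzero_entry by blast
    hence "k \<in> J" using y_J by blast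
    hence "D $$ (k,k) * (y $ k)\<^sup>2 < c * (y $ k)\<^sup>2" using k by (simp add: J_def)
    thus "\<exists>i\<in>{..<n}. D $$ (i,i) * (y $ i)\<^sup>2 < c * (y $ i)\<^sup>2" using k by blast
  qed simp
  ultimately show False by (simp add: sum_distrib_left)
qed

lemma size_filter_mset_diag_mat:
  assumes "D \<in> carrier_mat n n"
  shows "size (filter_mset Q (mset (diag_mat D))) = card {i. i < n \<and> Q (D $$ (i,i))}"
proof -
  have "size (filter_mset Q (mset (diag_mat D))) = length (filter Q (diag_mat D))"
    by (metis mset_filter size_mset)
  also have "\<dots> = card {i. i < length (diag_mat D) \<and> Q (diag_mat D ! i)}"
    by (rule length_filter_conv_card)
  also have "{i. i < length (diag_mat D) \<and> Q (diag_mat D ! i)} = {i. i < n \<and> Q (D $$ (i,i))}"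
    using assms by (auto simp: diag_mat_def)
  finally show ?thesis .
qed

theorem symmetric_mat_eigenvalues_below_le:
  fixes A :: "real mat" and L :: "real vec list"
  assumes A: "A \<in> carrier_mat n n" and sym: "transpose_mat A = A" and L: "set L \<subseteq> carrier_vec n"
    and bound: "\<And>x. x \<in> carrier_vec n \<Longrightarrow> (\<forall>l \<in> set L. l \<bullet> x = 0) \<Longrightarrow> c * (x \<bullet> x) \<le> x \<bullet> (A *\<^sub>v x)"
  shows "size {#e \<in># proots (char_poly A). e < c#} \<le> length L"
proof -
  obtain P where P: "P \<in> carrier_mat n n" "transpose_mat P * P = 1\<^sub>m n"
    and diag: "diagonal_mat (transpose_mat P * A * P)"
    using symmetric_mat_orthogonally_diagonalizable[OF A sym] by blast
  have D: "transpose_mat P * A * P \<in> carrier_mat n n" using P A by simp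
  show ?thesis
    unfolding proots_char_poly_orthogonally_diagonalized[OF A P diag] size_filter_mset_diag_mat[OF D]
    by (rule card_diagonal_entries_below_le[OF A P diag L bound])
qed

theorem symmetric_mat_eigenvalues_above_le:
  fixes A :: "real mat" and L :: "real vec list"
  assumes A: "A \<in> carrier_mat n n" and sym: "transpose_mat A = A" and L: "set L \<subseteq> carrier_vec n"
    and bound: "\<And>x. x \<in> carrier_vec n \<Longrightarrow> (\<forall>l \<in> set L. l \<bullet> x = 0) \<Longrightarrow> x \<bullet> (A *\<^sub>v x) \<le> c * (x \<bullet> x)"
  shows "size {#e \<in># proots (char_poly A). c < e#} \<le> length L"
proof -
  obtain P where P: "P \<in> carrier_mat n n" "transpose_mat P * P = 1\<^sub>m n"
    and diag: "diagonal_mat (transpose_mat P * A * P)"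
    using symmetric_mat_orthogonally_diagonalizable[OF A sym] by blast
  have D: "transpose_mat P * A * P \<in> carrier_mat n n" using P A by simp
  \<comment> \<open>apply the lower count to \<open>-A\<close>, which \<open>P\<close> diagonalizes as well\<close>
  have nA: "- A \<in> carrier_mat n n" and PnAP: "transpose_mat P * (- A) * P = - (transpose_mat P * A * P)"
    using A P by auto
  have "diagonal_mat (transpose_mat P * (- A) * P)"
    using diag D unfolding PnAP diagonal_mat_def by auto
  moreover have "(- c) * (x \<bullet> x) \<le> x \<bullet> (- A *\<^sub>v x)"
    if "x \<in> carrier_vec n" "\<forall>l \<in> set L. l \<bullet> x = 0" for x
    using bound[OF that] that(1) A by simp
  ultimately have "card {i. i < n \<and> (transpose_mat P * (- A) * P) $$ (i,i) < - c} \<le> length L"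
    by (rule card_diagonal_entries_below_le[OF nA P _ L])
  moreover have "{i. i < n \<and> (transpose_mat P * (- A) * P) $$ (i,i) < - c}
      = {i. i < n \<and> c < (transpose_mat P * A * P) $$ (i,i)}"
    unfolding PnAP using D by auto
  ultimately show ?thesis
    unfolding proots_char_poly_orthogonally_diagonalized[OF A P diag] size_filter_mset_diag_mat[OF D]
    by simp
qed

lemma size_proots_char_poly_symmetric:
  fixes A :: "real mat"
  assumes A: "A \<in> carrier_mat n n" and sym: "transpose_mat A = A"
  shows "size (proots (char_poly A)) = n"
proof -
  obtain P where P: "P \<in> carrier_mat n n" "transpose_mat P * P = 1\<^sub>m n"
    and diag: "diagonal_mat (transpose_mat P * A * P)"
    using symmetric_mat_orthogonally_diagonalizable[OF A sym] by blast
  show ?thesis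
    using proots_char_poly_orthogonally_diagonalized[OF A P diag] P A by (simp add: diag_mat_def)
qed

lemma sorted_nth_ge_if_few_below:
  fixes xs :: "'a :: linorder list"
  assumes xs: "sorted xs" and i: "i < length xs" and few: "length (filter (\<lambda>x. x < c) xs) \<le> i"
  shows "c \<le> xs ! i"
proof (rule ccontr)
  assume "\<not> c \<le> xs ! i"
  hence "{..i} \<subseteq> {j. j < length xs \<and> xs ! j < c}"
    using sorted_nth_mono[OF xs _ i] i by fastforce
  from card_mono[OF _ this] have "Suc i \<le> length (filter (\<lambda>x. x < c) xs)"
    by (simp add: length_filter_conv_card)
  with few show False by simp
qed

lemma sorted_nth_le_if_few_above:
  fixes xs :: "'a :: linorder list"
  assumes xs: "sorted xs" and i: "i < length xs" and few: "length (filter (\<lambda>x. c < x) xs) < length xs - i"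
  shows "xs ! i \<le> c"
proof (rule ccontr)
  assume "\<not> xs ! i \<le> c"
  hence "{i..<length xs} \<subseteq> {j. j < length xs \<and> c < xs ! j}"
    using sorted_nth_mono[OF xs] by fastforce
  from card_mono[OF _ this] have "length xs - i \<le> length (filter (\<lambda>x. c < x) xs)"
    by (simp add: length_filter_conv_card)
  with few show False by simp
qed

lemma length_filter_greater_rev_sort_nth:
  fixes xs :: "'a :: linorder list"
  assumes i: "i < length xs"
  shows "length (filter (\<lambda>x. rev (sort xs) ! i < x) xs) \<le> i"
proof -
  define ys where "ys = rev (sort xs)"
  have "length (filter (\<lambda>x. ys ! i < x) xs) = length (filter (\<lambda>x. ys ! i < x) ys)"
    unfolding ys_def by (metis length_rev mset_filter mset_sort rev_filter size_mset)
  also have "\<dots> = card {j. j < length ys \<and> ys ! i < ys ! j}" by (rule length_filter_conv_card)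
  also have "\<dots> \<le> card {..<i}"
  proof (rule card_mono)
    have "ys ! j \<le> ys ! i" if "i \<le> j" "j < length ys" for j
      using that sorted_nth_mono[OF sorted_sort, of "length xs - Suc j" "length xs - Suc i" xs] i
      by (simp add: ys_def rev_nth)
    thus "{j. j < length ys \<and> ys ! i < ys ! j} \<subseteq> {..<i}" by (auto simp: not_less[symmetric])
  qed simp
  finally show ?thesis by (simp add: ys_def)
qed

section \<open>Clique partitions and adjacency eigenvalues\<close>

lemma clique_partition_subset:
  "clique_partition n E F \<Longrightarrow> C \<in> F \<Longrightarrow> C \<subseteq> {..<n}"
  unfolding clique_partition_def is_clique_def by (auto simp: lessThan_atLeast0)

lemma clique_partition_finite:
  assumes "clique_partition n E F"
  shows "finite F"
proof (rule finite_subset)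
  show "F \<subseteq> Pow {..<n}" using clique_partition_subset[OF assms] by blast
qed simp

lemma card_cliques_containing_pair:
  assumes cp: "clique_partition n E F" and u: "u < n" and v: "v < n"
  shows "card {C \<in> F. u \<in> C \<and> v \<in> C} =
    (if u = v then clique_degree F u else if E u v then 1 else 0)"
proof (cases "u = v")
  case False
  show ?thesis
  proof (cases "E u v")
    case True
    then obtain C0 where "C0 \<in> F \<and> u \<in> C0 \<and> v \<in> C0" "\<And>C. C \<in> F \<and> u \<in> C \<and> v \<in> C \<Longrightarrow> C = C0"
      using cp u v unfolding clique_partition_def by metis
    hence "{C \<in> F. u \<in> C \<and> v \<in> C} = {C0}" by blast
    thus ?thesis using False True by simp
  next
    case nE: False
    have "{C \<in> F. u \<in> C \<and> v \<in> C} = {}"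
      using cp False nE unfolding clique_partition_def is_clique_def by blast
    thus ?thesis using False nE by (simp only: card.empty) simp
  qed
qed (simp add: clique_degree_def)

lemma transpose_adj_matrix:
  "simple_graph n E \<Longrightarrow> transpose_mat (adj_matrix n E) = adj_matrix n E"
  unfolding simple_graph_def adj_matrix_def by (auto intro!: eq_matI)

lemma adj_matrix_quadratic_form:
  assumes sg: "simple_graph n E" and cp: "clique_partition n E F" and x: "x \<in> carrier_vec n"
  shows "x \<bullet> (adj_matrix n E *\<^sub>v x)
    = (\<Sum>C\<in>F. (\<Sum>u\<in>C. x $ u)\<^sup>2) - (\<Sum>u<n. real (clique_degree F u) * (x $ u)\<^sup>2)"
proof -
  define w where "w u v = x $ u * x $ v" for u v
  have restrict: "(\<Sum>u\<in>C. f u) = (\<Sum>u<n. if u \<in> C then f u else 0)"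
    if "C \<in> F" for C and f :: "nat \<Rightarrow> real"
    using sum.inter_restrict[of "{..<n}" f C] clique_partition_subset[OF cp that]
    by (simp add: Int_absorb1)
  have "(\<Sum>u\<in>C. x $ u)\<^sup>2 = (\<Sum>u<n. \<Sum>v<n. if u \<in> C \<and> v \<in> C then w u v else 0)" if C: "C \<in> F" for C
  proof -
    have "(\<Sum>u\<in>C. x $ u)\<^sup>2 = (\<Sum>u\<in>C. \<Sum>v\<in>C. w u v)"
      by (simp add: w_def power2_eq_square sum_product)
    also have "\<dots> = (\<Sum>u<n. if u \<in> C then (\<Sum>v<n. if v \<in> C then w u v else 0) else 0)"
      by (simp add: restrict[OF C])
    finally show ?thesis by (auto intro!: sum.cong)
  qed
  hence "(\<Sum>C\<in>F. (\<Sum>u\<in>C. x $ u)\<^sup>2) = (\<Sum>C\<in>F. \<Sum>u<n. \<Sum>v<n. if u \<in> C \<and> v \<in> C then w u v else 0)"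
    by simp
  also have "\<dots> = (\<Sum>u<n. \<Sum>v<n. \<Sum>C\<in>F. if u \<in> C \<and> v \<in> C then w u v else 0)"
    by (subst sum.swap) (rule sum.cong[OF refl], rule sum.swap)
  also have "\<dots> = (\<Sum>u<n. \<Sum>v<n. w u v * card {C \<in> F. u \<in> C \<and> v \<in> C})"
    by (simp add: sum.inter_filter[OF clique_partition_finite[OF cp], symmetric] mult.commute)
  also have "\<dots> = (\<Sum>u<n. \<Sum>v<n. w u v * (if E u v then 1 else 0) + (if u = v then w u u * clique_degree F u else 0))"
    using sg unfolding simple_graph_def
    by (intro sum.cong refl) (auto simp: card_cliques_containing_pair[OF cp])
  also have "\<dots> = (\<Sum>u<n. \<Sum>v<n. w u v * (if E u v then 1 else 0))
      + (\<Sum>u<n. real (clique_degree F u) * (x $ u)\<^sup>2)"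
    by (simp add: sum.distrib w_def power2_eq_square mult.commute)
  also have "(\<Sum>u<n. \<Sum>v<n. w u v * (if E u v then 1 else 0)) = x \<bullet> (adj_matrix n E *\<^sub>v x)"
    using x by (simp add: adj_matrix_def scalar_prod_def lessThan_atLeast0 sum_distrib_left w_def)
      (auto intro!: sum.cong)
  finally show ?thesis by simp
qed

lemma length_sorted_adj_eigenvalues:
  assumes "simple_graph n E"
  shows "length (sorted_list_of_multiset (adj_eigenvalues n E)) = n"
proof -
  have "size (adj_eigenvalues n E) = n"
    unfolding adj_eigenvalues_def
    by (rule size_proots_char_poly_symmetric[OF _ transpose_adj_matrix[OF assms]])
      (simp add: adj_matrix_def)
  thus ?thesis by (metis mset_sorted_list_of_multiset size_mset)
qed

lemma adj_eig_from_bottom: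
  assumes "simple_graph n E" and "1 \<le> i" "i \<le> n"
  shows "adj_eig n E (n - i + 1) = sorted_list_of_multiset (adj_eigenvalues n E) ! (i - 1)"
  using assms length_sorted_adj_eigenvalues[OF assms(1)] by (simp add: adj_eig_def rev_nth)

lemma length_filter_sorted_list_of_multiset:
  "length (filter P (sorted_list_of_multiset M)) = size (filter_mset P M)"
  by (metis mset_filter mset_sorted_list_of_multiset size_mset)

lemma adj_eig_lower_bound:
  assumes sg: "simple_graph n E" and cp: "clique_partition n E F" and i: "1 \<le> i" "i \<le> n"
  shows "- real (sorted_clique_degree n F i) \<le> adj_eig n E (n - i + 1)"
proof -
  define t where "t = sorted_clique_degree n F i"
  define ds where "ds = map (clique_degree F) [0..<n]"
  define L where "L = map (unit_vec n :: nat \<Rightarrow> real vec) (filter (\<lambda>v. t < clique_degree F v) [0..<n])"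
  have "length L = length (filter (\<lambda>d. t < d) ds)"
    by (simp add: L_def ds_def filter_map o_def)
  also have "\<dots> \<le> i - 1"
    using length_filter_greater_rev_sort_nth[of "i - 1" ds] i
    by (simp add: t_def ds_def sorted_clique_degree_def)
  finally have L_len: "length L \<le> i - 1" .
  have "- real t * (x \<bullet> x) \<le> x \<bullet> (adj_matrix n E *\<^sub>v x)"
    if x: "x \<in> carrier_vec n" and xL: "\<forall>l \<in> set L. l \<bullet> x = 0" for x
  proof -
    have "real (clique_degree F u) * (x $ u)\<^sup>2 \<le> real t * (x $ u)\<^sup>2" if u: "u < n" for u
    proof (cases "t < clique_degree F u")
      case True
      hence "unit_vec n u \<bullet> x = 0" using xL u by (auto simp: L_def)
      thus ?thesis using u x by simp
    qed (simp add: mult_right_mono)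
    hence "(\<Sum>u<n. real (clique_degree F u) * (x $ u)\<^sup>2) \<le> real t * (\<Sum>u<n. (x $ u)\<^sup>2)"
      unfolding sum_distrib_left by (intro sum_mono) simp
    moreover have "0 \<le> (\<Sum>C\<in>F. (\<Sum>u\<in>C. x $ u)\<^sup>2)" by (simp add: sum_nonneg)
    moreover have "x \<bullet> x = (\<Sum>u<n. (x $ u)\<^sup>2)"
      using x by (simp add: scalar_prod_def lessThan_atLeast0 power2_eq_square)
    ultimately show ?thesis unfolding adj_matrix_quadratic_form[OF sg cp x] by simp
  qed
  hence "size {#e \<in># adj_eigenvalues n E. e < - real t#} \<le> length L"
    unfolding adj_eigenvalues_def
    by (intro symmetric_mat_eigenvalues_below_le[OF _ transpose_adj_matrix[OF sg]])
      (auto simp: adj_matrix_def L_def)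
  hence "- real t \<le> sorted_list_of_multiset (adj_eigenvalues n E) ! (i - 1)"
    using L_len i length_sorted_adj_eigenvalues[OF sg]
    by (intro sorted_nth_ge_if_few_below) (auto simp: length_filter_sorted_list_of_multiset)
  thus ?thesis unfolding t_def adj_eig_from_bottom[OF sg i] .
qed

lemma indicator_vec_scalar_prod:
  fixes x :: "'a :: semiring_1 vec"
  assumes "C \<subseteq> {..<n}" and "x \<in> carrier_vec n"
  shows "vec n (\<lambda>v. if v \<in> C then 1 else 0) \<bullet> x = (\<Sum>u\<in>C. x $ u)"
proof -
  have "vec n (\<lambda>v. if v \<in> C then 1 else 0) \<bullet> x = (\<Sum>u<n. if u \<in> C then x $ u else 0)"
    using assms(2) by (auto simp: scalar_prod_def lessThan_atLeast0 intro!: sum.cong)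
  also have "\<dots> = (\<Sum>u\<in>C. x $ u)"
    using sum.inter_restrict[of "{..<n}" "\<lambda>u. x $ u" C] assms(1) by (simp add: Int_absorb1)
  finally show ?thesis .
qed

lemma adj_eig_clique_regular:
  assumes sg: "simple_graph n E" and cp: "clique_partition n E F" and reg: "clique_regular n F"
    and i: "1 \<le> i" "i + card F \<le> n"
  shows "adj_eig n E (n - i + 1) = - real (sorted_clique_degree n F i)"
proof -
  obtain k where k: "\<And>v. v < n \<Longrightarrow> clique_degree F v = k"
    using reg unfolding clique_regular_def by blast
  have "rev (sort (map (clique_degree F) [0..<n])) ! (i - 1) \<in> set (rev (sort (map (clique_degree F) [0..<n])))"
    using i by (intro nth_mem) simp
  hence t: "sorted_clique_degree n F i = k" using k by (auto simp: sorted_clique_degree_def)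
  obtain Fs where Fs: "set Fs = F" "distinct Fs"
    using finite_distinct_list[OF clique_partition_finite[OF cp]] by blast
  define L where "L = map (\<lambda>C. vec n (\<lambda>v. if v \<in> C then 1 else 0) :: real vec) Fs"
  have L_len: "length L = card F" using Fs distinct_card[of Fs] by (simp add: L_def)
  have "x \<bullet> (adj_matrix n E *\<^sub>v x) \<le> - real k * (x \<bullet> x)"
    if x: "x \<in> carrier_vec n" and xL: "\<forall>l \<in> set L. l \<bullet> x = 0" for x
  proof -
    have "(\<Sum>u\<in>C. x $ u) = 0" if "C \<in> F" for C
      using xL that Fs indicator_vec_scalar_prod[OF clique_partition_subset[OF cp that] x]
      by (auto simp: L_def)
    moreover have "x \<bullet> x = (\<Sum>u<n. (x $ u)\<^sup>2)"
      using x by (simp add: scalar_prod_def lessThan_atLeast0 power2_eq_square)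
    ultimately show ?thesis
      unfolding adj_matrix_quadratic_form[OF sg cp x] using k by (simp add: sum_distrib_left sum_negf)
  qed
  hence "size {#e \<in># adj_eigenvalues n E. - real k < e#} \<le> length L"
    unfolding adj_eigenvalues_def
    by (intro symmetric_mat_eigenvalues_above_le[OF _ transpose_adj_matrix[OF sg]])
      (auto simp: adj_matrix_def L_def)
  hence "sorted_list_of_multiset (adj_eigenvalues n E) ! (i - 1) \<le> - real k"
    using L_len i length_sorted_adj_eigenvalues[OF sg]
    by (intro sorted_nth_le_if_few_above) (auto simp: length_filter_sorted_list_of_multiset)
  moreover have "- real k \<le> adj_eig n E (n - i + 1)"
    using adj_eig_lower_bound[OF sg cp i(1)] i t by simp
  ultimately show ?thesis using adj_eig_from_bottom[OF sg i(1)] i t by simp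
qed

theorem mainTheorem5:
  fixes n :: nat and E :: "nat \<Rightarrow> nat \<Rightarrow> bool" and F :: "nat set set"
  assumes "simple_graph n E"
    and "clique_partition n E F"
  shows "(\<forall>i. 1 \<le> i \<and> i \<le> neg_inertia n E \<longrightarrow>
            adj_eig n E (n - i + 1) \<ge> - real (sorted_clique_degree n F i))
       \<and> (clique_regular n F \<and> int (neg_inertia n E) = int n - int (card F) \<longrightarrow>
            (\<forall>i. 1 \<le> i \<and> i \<le> neg_inertia n E \<longrightarrow>
              adj_eig n E (n - i + 1) = - real (sorted_clique_degree n F i)))"
proof -
  have "neg_inertia n E \<le> n"
    using length_sorted_adj_eigenvalues[OF assms(1)] size_filter_mset_lesseq
    unfolding neg_inertia_def by (metis mset_sorted_list_of_multiset size_mset)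
  thus ?thesis
    using adj_eig_lower_bound[OF assms] adj_eig_clique_regular[OF assms] by auto
qed

end
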